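(* Let $(W,S)$ be a Coxeter system with $S$ finite, $\Gamma$ a totally ordered abelian group, $\varphi:W\to\Gamma$ a weight function, $p$ a prime and $G$ a finite $p$-group of automorphisms of $W$ with $\sigma(S)=S$ and $\varphi\circ\sigma=\varphi$ for all $\sigma\in G$. If $h\in\mathcal{H}_G$ and $h'\in\mathcal{H}^G$ satisfy $\mathrm{can}_G(h)=\mathrm{br}_G(h')$, then $\tau_G(h)\equiv\tau(h')\bmod pA$.
   Context: A weight function satisfies $\varphi(ww')=\varphi(w)+\varphi(w')$ whenever $\ell(ww')=\ell(w)+\ell(w')$. $A=\mathbb{Z}[\Gamma]$. $\mathcal{H}=\mathcal{H}(W,S,\Gamma,\varphi)$ is the Hecke algebra over $A$: free $A$-module with basis $(T_w)_{w\in W}$, with $T_wT_{w'}=T_{ww'}$ if $\ell(ww')=\ell(w)+\ell(w')$ and $(T_s-e^{\varphi(s)})(T_s+e^{-\varphi(s)})=0$ for $s\in S$; $G$ acts on it by $\sigma(T_w)=T_{\sigma(w)}$. $\tau:\mathcal{H}\to A$ is the $A$-linear map with $\tau(T_1)=1$ and $\tau(T_w)=0$ for $w\neq1$. For each $G$-orbit $\omega\subseteq S$ with $W_\omega=\langle\omega\rangle$ finite, $s_\omega$ is the longest element of $W_\omega$; $S_G$ is the set of these. $(W^G,S_G)$ is a Coxeter system and $\varphi_G=\varphi|_{W^G}$ a weight function on it; $\mathcal{H}_G=\mathcal{H}(W^G,S_G,\Gamma,\varphi_G)$ with basis $(T^G_w)_{w\in W^G}$ and $\tau_G$ defined analogously.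 Brauer quotient: $\mathrm{Br}_G(\mathcal{H})=\mathcal{H}^G/\sum_{H<G}\mathrm{Tr}_H^G(\mathcal{H}^H)$ (proper subgroups, $\mathrm{Tr}_H^G(m)=\sum_{\sigma\in[G/H]}\sigma(m)$), with canonical map $\mathrm{br}_G$. $\mathrm{can}_G:\mathcal{H}_G\to\mathrm{Br}_G(\mathcal{H})$ is the $A$-linear map with $\mathrm{can}_G(T^G_w)=\mathrm{br}_G(T_w)$ for $w\in W^G$. *)

theory Defs
  imports "HOL-Algebra.Bij" "HOL-Algebra.Coset" "HOL-Computational_Algebra.Primes" "HOL-Library.Poly_Mapping" "HOL-Library.Function_Algebras"
begin

definition word_prod :: "('w, 'b) monoid_scheme \<Rightarrow> 'w list \<Rightarrow> 'w" where
  "word_prod W ws = foldr (\<lambda>s x. s \<otimes>\<^bsub>W\<^esub> x) ws \<one>\<^bsub>W\<^esub>"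

definition cox_len :: "('w, 'b) monoid_scheme \<Rightarrow> 'w set \<Rightarrow> 'w \<Rightarrow> nat" where
  "cox_len W S w = (LEAST n. \<exists>ws. length ws = n \<and> set ws \<subseteq> S \<and> word_prod W ws = w)"

text \<open>Coxeter system: W is generated by a set S of elements of order 2 and the exchange
  condition holds (Bourbaki, Lie Groups Ch. IV, 1.6, Thm. 1: equivalent to the Coxeter
  presentation).\<close>
definition coxeter_system :: "('w, 'b) monoid_scheme \<Rightarrow> 'w set \<Rightarrow> bool" where
  "coxeter_system W S \<longleftrightarrow> group W \<and> S \<subseteq> carrier W \<and>
     (\<forall>s\<in>S. s \<noteq> \<one>\<^bsub>W\<^esub> \<and> s \<otimes>\<^bsub>W\<^esub> s = \<one>\<^bsub>W\<^esub>) \<and>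
     (\<forall>w\<in>carrier W. \<exists>ws. set ws \<subseteq> S \<and> word_prod W ws = w) \<and>
     (\<forall>s\<in>S. \<forall>ws. set ws \<subseteq> S \<longrightarrow> length ws = cox_len W S (word_prod W ws) \<longrightarrow>
        cox_len W S (s \<otimes>\<^bsub>W\<^esub> word_prod W ws) \<le> length ws \<longrightarrow>
        (\<exists>j<length ws. s \<otimes>\<^bsub>W\<^esub> word_prod W ws = word_prod W (take j ws @ drop (Suc j) ws)))"

definition weight_function :: "('w, 'b) monoid_scheme \<Rightarrow> 'w set \<Rightarrow> ('w \<Rightarrow> 'g::ab_group_add) \<Rightarrow> bool" where
  "weight_function W S \<phi> \<longleftrightarrow> (\<forall>w\<in>carrier W. \<forall>w'\<in>carrier W.
      cox_len W S (w \<otimes>\<^bsub>W\<^esub> w') = cox_len W S w + cox_len W S w' \<longrightarrow>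
      \<phi> (w \<otimes>\<^bsub>W\<^esub> w') = \<phi> w + \<phi> w')"

type_synonym 'g grpring = "'g \<Rightarrow>\<^sub>0 int"

text \<open>Elements of the Hecke algebra H(W,S,Gamma,phi): the A-linear combination
  sum_w f(w) T_w is represented by its coefficient function f (finite support in W).
  The statement only uses the A-module structure of H, so the multiplication is omitted.\<close>
definition hecke_elems :: "('w, 'b) monoid_scheme \<Rightarrow> ('w \<Rightarrow> 'g grpring) set" where
  "hecke_elems W = {f. finite {w. f w \<noteq> 0} \<and> (\<forall>w. w \<notin> carrier W \<longrightarrow> f w = 0)}"

definition hecke_tau :: "('w, 'b) monoid_scheme \<Rightarrow> ('w \<Rightarrow> 'g grpring) \<Rightarrow> 'g grpring" where
  "hecke_tau W f = f \<one>\<^bsub>W\<^esub>"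

text \<open>sigma(T_w) = T_{sigma w}, so the coefficient of sigma(f) at v is f(sigma^{-1} v).\<close>
definition hecke_act :: "('w, 'b) monoid_scheme \<Rightarrow> ('w \<Rightarrow> 'w) \<Rightarrow> ('w \<Rightarrow> 'g grpring) \<Rightarrow> ('w \<Rightarrow> 'g grpring)" where
  "hecke_act W \<sigma> f = (\<lambda>v. if v \<in> carrier W then f (inv_into (carrier W) \<sigma> v) else 0)"

definition fixed_elems :: "('w, 'b) monoid_scheme \<Rightarrow> ('w \<Rightarrow> 'w) set \<Rightarrow> ('w \<Rightarrow> 'g grpring) set" where
  "fixed_elems W H = {f \<in> hecke_elems W. \<forall>\<sigma>\<in>H. hecke_act W \<sigma> f = f}"

definition relative_trace :: "('w, 'b) monoid_scheme \<Rightarrow> ('w \<Rightarrow> 'w) set \<Rightarrow> ('w \<Rightarrow> 'w) set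
    \<Rightarrow> ('w \<Rightarrow> 'g grpring) \<Rightarrow> ('w \<Rightarrow> 'g grpring)" where
  "relative_trace W G H m =
     (\<Sum>C \<in> (\<lambda>\<sigma>. l_coset (AutoGroup W) \<sigma> H) ` G. hecke_act W (SOME \<sigma>. \<sigma> \<in> C) m)"

inductive_set trace_ideal :: "('w, 'b) monoid_scheme \<Rightarrow> ('w \<Rightarrow> 'w) set \<Rightarrow> ('w \<Rightarrow> 'g grpring) set"
  for W G where
  zero: "0 \<in> trace_ideal W G"
| add: "\<lbrakk>subgroup H (AutoGroup W); H \<subset> G; m \<in> fixed_elems W H; y \<in> trace_ideal W G\<rbrakk>
        \<Longrightarrow> relative_trace W G H m + y \<in> trace_ideal W G"

definition brauer_br :: "('w, 'b) monoid_scheme \<Rightarrow> ('w \<Rightarrow> 'w) set \<Rightarrow> ('w \<Rightarrow> 'g grpring)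
    \<Rightarrow> ('w \<Rightarrow> 'g grpring) set" where
  "brauer_br W G x = {y \<in> fixed_elems W G. x - y \<in> trace_ideal W G}"

definition fixed_points :: "('w, 'b) monoid_scheme \<Rightarrow> ('w \<Rightarrow> 'w) set \<Rightarrow> 'w set" where
  "fixed_points W G = {w \<in> carrier W. \<forall>\<sigma>\<in>G. \<sigma> w = w}"

text \<open>Elements of H_G = H(W^G,S_G,Gamma,phi_G): coefficient functions supported on W^G
  (basis T^G_w, w in W^G); again only the A-module structure is needed.\<close>
definition heckeG_elems :: "('w, 'b) monoid_scheme \<Rightarrow> ('w \<Rightarrow> 'w) set \<Rightarrow> ('w \<Rightarrow> 'g grpring) set" where
  "heckeG_elems W G = {f. finite {w. f w \<noteq> 0} \<and> (\<forall>w. w \<notin> fixed_points W G \<longrightarrow> f w = 0)}"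

definition heckeG_tau :: "('w, 'b) monoid_scheme \<Rightarrow> ('w \<Rightarrow> 'g grpring) \<Rightarrow> 'g grpring" where
  "heckeG_tau W f = f \<one>\<^bsub>W\<^esub>"

text \<open>can_G(T^G_w) = br_G(T_w), extended A-linearly: can_G(sum f(w) T^G_w) = br_G(sum f(w) T_w).\<close>
definition can_G :: "('w, 'b) monoid_scheme \<Rightarrow> ('w \<Rightarrow> 'w) set \<Rightarrow> ('w \<Rightarrow> 'g grpring)
    \<Rightarrow> ('w \<Rightarrow> 'g grpring) set" where
  "can_G W G h = brauer_br W G h"

end

theory Submission
  imports Defs "HOL-Algebra.Left_Coset"
begin

text \<open>Every automorphism of W fixes the identity, so evaluating an element of \<open>\<H>\<close> at the
  identity (that is, applying \<open>\<tau>\<close>) is G-invariant. Hence \<open>\<tau>\<close> maps \<open>Tr\<^sub>H\<^sup>G(m)\<close> to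
  \<open>[G:H] \<tau>(m)\<close>, and the index of a proper subgroup of a p-group is divisible by p. So \<open>\<tau>\<close> maps
  the whole trace submodule into \<open>pA\<close>. Since \<open>can\<^sub>G(h) = br\<^sub>G(h')\<close> says that \<open>h - h'\<close>
  lies in that submodule, and \<open>\<tau>\<^sub>G\<close> and \<open>\<tau>\<close> are both evaluation at the identity, the
  congruence follows.\<close>

lemma (in group) prime_dvd_card_lcosets_of_proper_subgroup:
  assumes "prime p" and "finite (carrier G)" and "order G = p ^ n"
    and "subgroup H G" and "H \<noteq> carrier G"
  shows "p dvd card (lcosets H)"
proof -
  have index: "card (lcosets H) * card H = p ^ n"
    using l_lagrange[OF assms(2,4)] assms(3) by simp
  then have "card (lcosets H) dvd p ^ n"
    by (metis dvd_triv_left)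
  then obtain k where k: "card (lcosets H) = p ^ k"
    using divides_primepow_nat[OF assms(1)] by blast
  have "H \<subset> carrier G"
    using assms(4,5) subgroup.subset by blast
  then have "card H < order G"
    using assms(2) psubset_card_mono by (simp add: order_def)
  then have "k \<noteq> 0"
    using index k assms(3) by (metis mult_1 power_0 less_irrefl)
  then show ?thesis
    using k assms(1) by (simp add: prime_gt_1_nat)
qed

lemma AutoGroup_inv_into_one:
  assumes "group W" and "\<tau> \<in> carrier (AutoGroup W)"
  shows "inv_into (carrier W) \<tau> \<one>\<^bsub>W\<^esub> = \<one>\<^bsub>W\<^esub>"
proof -
  have hom: "\<tau> \<in> hom W W" and bij: "bij_betw \<tau> (carrier W) (carrier W)"
    using assms(2) by (auto simp: AutoGroup_def auto_def BijGroup_def Bij_def)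
  have "\<tau> \<one>\<^bsub>W\<^esub> = \<one>\<^bsub>W\<^esub>"
    using hom assms(1) by (simp add: group_hom.hom_one group_hom_axioms_def group_hom_def)
  then show ?thesis
    using bij assms(1) by (metis bij_betw_def inv_into_f_f group.is_monoid monoid.one_closed)
qed

lemma hecke_act_at_one:
  assumes "group W" and "\<tau> \<in> carrier (AutoGroup W)"
  shows "hecke_act W \<tau> m \<one>\<^bsub>W\<^esub> = m \<one>\<^bsub>W\<^esub>"
  using AutoGroup_inv_into_one[OF assms] assms(1)
  by (simp add: hecke_act_def group.is_monoid monoid.one_closed)

lemma sum_fun_apply: "sum f A x = (\<Sum>a\<in>A. f a x)"
  by (induction A rule: infinite_finite_induct) auto

lemma relative_trace_at_one:
  assumes "group W" and "G \<subseteq> carrier (AutoGroup W)" and "subgroup H (AutoGroup W)"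
  shows "relative_trace W G H m \<one>\<^bsub>W\<^esub>
           = of_nat (card ((\<lambda>\<sigma>. l_coset (AutoGroup W) \<sigma> H) ` G)) * m \<one>\<^bsub>W\<^esub>"
proof -
  let ?A = "AutoGroup W"
  have A: "group ?A"
    using assms(1) by (rule group.AutoGroup)
  have "hecke_act W (SOME \<sigma>. \<sigma> \<in> C) m \<one>\<^bsub>W\<^esub> = m \<one>\<^bsub>W\<^esub>"
    if coset: "C \<in> (\<lambda>\<sigma>. l_coset ?A \<sigma> H) ` G" for C
  proof -
    obtain \<sigma> where \<sigma>: "\<sigma> \<in> G" "C = l_coset ?A \<sigma> H"
      using coset by blast
    have "\<sigma> \<in> C"
      using \<sigma> assms(2,3) group.lcos_self[OF A] by blast
    then have "(SOME \<sigma>. \<sigma> \<in> C) \<in> C"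
      by (rule someI[where P = "\<lambda>\<sigma>. \<sigma> \<in> C"])
    moreover have "C \<subseteq> carrier ?A"
      using \<sigma> assms(2,3) group.l_coset_subset_G[OF A] subgroup.subset by blast
    ultimately show ?thesis
      using hecke_act_at_one[OF assms(1)] by blast
  qed
  then show ?thesis
    by (simp add: relative_trace_def sum_fun_apply)
qed

lemma trace_ideal_at_one_dvd:
  assumes "group W" and "prime p"
    and "subgroup G (AutoGroup W)" and "finite G" and "card G = p ^ n"
    and "t \<in> trace_ideal W G"
  shows "(of_nat p :: 'g::comm_monoid_add grpring) dvd t \<one>\<^bsub>W\<^esub>"
  using assms(6)
proof induction
  case zero
  then show ?case by simp
next
  case (add H m y)
  let ?A = "AutoGroup W"
  let ?G = "?A\<lparr>carrier := G\<rparr>"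
  have A: "group ?A"
    using assms(1) by (rule group.AutoGroup)
  have "group ?G"
    using assms(3) A by (rule subgroup.subgroup_is_group)
  moreover have "subgroup H ?G"
    using group.subgroup_incl[OF A add.hyps(1) assms(3)] add.hyps(2) by blast
  moreover have "lcosets\<^bsub>?G\<^esub> H = (\<lambda>\<sigma>. l_coset ?A \<sigma> H) ` G"
    by (auto simp: LCOSETS_def)
  ultimately have "p dvd card ((\<lambda>\<sigma>. l_coset ?A \<sigma> H) ` G)"
    using group.prime_dvd_card_lcosets_of_proper_subgroup[of ?G p n H] assms(2,4,5) add.hyps(2)
    by (auto simp: order_def)
  then obtain k where "card ((\<lambda>\<sigma>. l_coset ?A \<sigma> H) ` G) = p * k" ..
  then have "relative_trace W G H m \<one>\<^bsub>W\<^esub> = of_nat p * (of_nat k * m \<one>\<^bsub>W\<^esub>)"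
    using relative_trace_at_one[OF assms(1) subgroup.subset[OF assms(3)] add.hyps(1)]
    by (simp add: mult.assoc)
  then have "(of_nat p :: 'g grpring) dvd relative_trace W G H m \<one>\<^bsub>W\<^esub>"
    by (rule dvdI)
  then show ?case
    using add.IH by simp
qed

lemma brauer_br_eq_imp_diff_in_trace_ideal:
  assumes "y \<in> fixed_elems W G" and "brauer_br W G x = brauer_br W G y"
  shows "x - y \<in> trace_ideal W G"
proof -
  have "y \<in> brauer_br W G y"
    using assms(1) by (simp add: brauer_br_def trace_ideal.zero)
  then have "y \<in> brauer_br W G x"
    using assms(2) by simp
  then show ?thesis
    by (simp add: brauer_br_def)
qed

theorem corollary2p6:
  fixes W :: "('w, 'b) monoid_scheme" and S :: "'w set"
    and \<phi> :: "'w \<Rightarrow> 'g::linordered_ab_group_add"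
    and p :: nat and G :: "('w \<Rightarrow> 'w) set"
    and h h' :: "'w \<Rightarrow> 'g grpring"
  assumes "coxeter_system W S" and "finite S"
    and "weight_function W S \<phi>"
    and "prime p"
    and "subgroup G (AutoGroup W)" and "finite G" and "\<exists>n. card G = p ^ n"
    and "\<forall>\<sigma>\<in>G. \<sigma> ` S = S"
    and "\<forall>\<sigma>\<in>G. \<forall>w\<in>carrier W. \<phi> (\<sigma> w) = \<phi> w"
    and "h \<in> heckeG_elems W G" and "h' \<in> fixed_elems W G"
    and "can_G W G h = brauer_br W G h'"
  shows "(of_nat p :: 'g grpring) dvd (heckeG_tau W h - hecke_tau W h')"
proof -
  have "group W"
    using assms(1) by (simp add: coxeter_system_def)
  moreover obtain n where "card G = p ^ n"
    using assms(7) by blast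
  moreover have "h - h' \<in> trace_ideal W G"
    using brauer_br_eq_imp_diff_in_trace_ideal assms(11,12) by (simp add: can_G_def)
  ultimately have "(of_nat p :: 'g grpring) dvd (h - h') \<one>\<^bsub>W\<^esub>"
    using trace_ideal_at_one_dvd assms(4-6) by blast
  then show ?thesis
    by (simp add: heckeG_tau_def hecke_tau_def)
qed

end
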